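(* Let $a,b>0$ and let $H=\frac12 f(p^2-a^2x^2,q^2-b^2y^2)$ on $\mathbb{R}^4$ (coordinates $(x,y,p,q)$), where $f$ is smooth with $f(0,0)=0$, $f_u(0,0)=f_v(0,0)=1$. Let $\mathbf v_1=(1,0,a,0)$, $\mathbf v_2=(0,1,0,-b)$, $\mathbf v_3=(1,0,-a,0)$, $\mathbf v_4=(0,1,0,b)$, and let $\phi_\pm:\mathbb{R}\to\mathbb{R}$ be $C^k$ ($k\ge1$) functions vanishing to order $l\le k$ at $0$. Then there are unique functions $\psi_\pm$ defined near $0$ such that the curves $\gamma_\pm(s)=s\mathbf v_1\pm s\mathbf v_2+\phi_\pm(s)\mathbf v_3+\psi_\pm(s)\mathbf v_4$ satisfy $H(\gamma_\pm(s))\equiv0$. Moreover $\psi_\pm$ are $C^k$ and vanish to order $l$ at $0$. In the case $H=\frac12(p^2+q^2-a^2x^2-b^2y^2)$, $\psi_\pm=\mp\frac{a^2}{b^2}\phi_\pm$.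
   Context: A function $\phi$ vanishes to order $l$ at $0$ ($l$ real) if $\phi(s)=\bar\phi(s)s^l$ with $\bar\phi$ $C^k$ on $\mathbb{R}\setminus\{0\}$ and $\frac{d^j}{ds^j}\bar\phi$ bounded on $[-1,1]\setminus\{0\}$ for $0\le j\le l$. *)

theory Defs
  imports "HOL-Analysis.Analysis"
begin

definition Ck_on :: "nat \<Rightarrow> real set \<Rightarrow> (real \<Rightarrow> real) \<Rightarrow> bool" where
  "Ck_on k U g \<longleftrightarrow>
     (\<forall>j<k. \<forall>x\<in>U. ((deriv ^^ j) g) differentiable (at x)) \<and>
     continuous_on U ((deriv ^^ k) g)"

definition pdu :: "(real \<Rightarrow> real \<Rightarrow> real) \<Rightarrow> real \<Rightarrow> real \<Rightarrow> real" where
  "pdu g = (\<lambda>u v. deriv (\<lambda>t. g t v) u)"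

definition pdv :: "(real \<Rightarrow> real \<Rightarrow> real) \<Rightarrow> real \<Rightarrow> real \<Rightarrow> real" where
  "pdv g = (\<lambda>u v. deriv (\<lambda>t. g u t) v)"

definition iter_pd :: "bool list \<Rightarrow> (real \<Rightarrow> real \<Rightarrow> real) \<Rightarrow> real \<Rightarrow> real \<Rightarrow> real" where
  "iter_pd ws g = foldr (\<lambda>w h. if w then pdu h else pdv h) ws g"

definition smooth2 :: "(real \<Rightarrow> real \<Rightarrow> real) \<Rightarrow> bool" where
  "smooth2 g \<longleftrightarrow>
     (\<forall>ws. continuous_on UNIV (\<lambda>z. iter_pd ws g (fst z) (snd z)) \<and>
           (\<forall>u v. (\<lambda>t. iter_pd ws g t v) differentiable (at u) \<and>
                  (\<lambda>t. iter_pd ws g u t) differentiable (at v)))"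

definition vanishes_to_order :: "nat \<Rightarrow> real \<Rightarrow> real set \<Rightarrow> (real \<Rightarrow> real) \<Rightarrow> bool" where
  "vanishes_to_order k l U g \<longleftrightarrow>
     (\<exists>gbar. (\<forall>s\<in>U - {0}. g s = gbar s * \<bar>s\<bar> powr l) \<and>
             Ck_on k (U - {0}) gbar \<and>
             (\<forall>j::nat. real j \<le> l \<longrightarrow>
                bounded (((deriv ^^ j) gbar) ` ((U \<inter> {-1..1}) - {0}))))"

definition Ham :: "real \<Rightarrow> real \<Rightarrow> (real \<Rightarrow> real \<Rightarrow> real) \<Rightarrow> real \<times> real \<times> real \<times> real \<Rightarrow> real" where
  "Ham a b f z = (case z of (x, y, p, q) \<Rightarrow> f (p\<^sup>2 - a\<^sup>2 * x\<^sup>2) (q\<^sup>2 - b\<^sup>2 * y\<^sup>2) / 2)"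

definition vv1 :: "real \<Rightarrow> real \<times> real \<times> real \<times> real" where "vv1 a = (1, 0, a, 0)"
definition vv2 :: "real \<Rightarrow> real \<times> real \<times> real \<times> real" where "vv2 b = (0, 1, 0, -b)"
definition vv3 :: "real \<Rightarrow> real \<times> real \<times> real \<times> real" where "vv3 a = (1, 0, -a, 0)"
definition vv4 :: "real \<Rightarrow> real \<times> real \<times> real \<times> real" where "vv4 b = (0, 1, 0, b)"

definition gam :: "real \<Rightarrow> real \<Rightarrow> real \<Rightarrow> (real \<Rightarrow> real) \<Rightarrow> (real \<Rightarrow> real) \<Rightarrow> real \<Rightarrow> real \<times> real \<times> real \<times> real" where
  "gam a b \<sigma> \<phi> \<psi> s = s *\<^sub>R vv1 a + (\<sigma> * s) *\<^sub>R vv2 b + \<phi> s *\<^sub>R vv3 a + \<psi> s *\<^sub>R vv4 b"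

end

(*
  Along gamma(s) one has H(gamma(s)) = f(U(s), -4 b^2 sigma s psi(s)) / 2 with U(s) = -4 a^2 s phi(s).
  Since f_v(0,0) > 0, the zero set of f near the origin is the graph of a smooth function
  v = g(u) with g(0) = 0 (implicit function theorem), and Hadamard's lemma writes
  g(u) = u h(u) with h of class C^k and h(0) = -f_u(0,0)/f_v(0,0) = -1.
  Hence, for s <> 0, H(gamma(s)) = 0 forces psi(s) = sigma a^2/b^2 phi(s) h(U(s)):
  psi is phi times a C^k function, which gives uniqueness, C^k regularity and vanishing
  to order l at once. For f(u,v) = u + v the graph is v = -u, so h = -1.
*)

theory Submission
  imports Defs
begin

section \<open>Functions of class C^k\<close>

lemma real_differentiable_imp_field_differentiable:
  "(f :: real \<Rightarrow> real) differentiable at x \<Longrightarrow> f field_differentiable at x"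
  by (metis DERIV_deriv_iff_real_differentiable field_differentiable_def)

lemma Ck_on_0: "Ck_on 0 U g \<longleftrightarrow> continuous_on U g"
  by (simp add: Ck_on_def)

lemma Ck_on_Suc:
  "Ck_on (Suc n) U g \<longleftrightarrow> (\<forall>x\<in>U. g differentiable at x) \<and> Ck_on n U (deriv g)"
proof -
  have "(\<forall>j<Suc n. P j) \<longleftrightarrow> P 0 \<and> (\<forall>j<n. P (Suc j))" for P :: "nat \<Rightarrow> bool"
    using less_Suc_eq_0_disj by auto
  then show ?thesis
    unfolding Ck_on_def by (simp add: funpow_Suc_right del: funpow.simps)
qed

lemma Ck_on_subset: "Ck_on n U g \<Longrightarrow> V \<subseteq> U \<Longrightarrow> Ck_on n V g"
  unfolding Ck_on_def by (meson continuous_on_subset subsetD)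

lemma Ck_on_cong:
  assumes "open U" "\<And>x. x \<in> U \<Longrightarrow> g x = h x"
  shows "Ck_on n U g \<longleftrightarrow> Ck_on n U h"
proof -
  have eq_near: "\<forall>\<^sub>F y in nhds x. g y = h y" if "x \<in> U" for x
    using assms that eventually_nhds by blast
  then have deriv_eq: "(deriv ^^ j) g x = (deriv ^^ j) h x" if "x \<in> U" for x j
    using higher_deriv_cong_ev that by blast
  have "(deriv ^^ j) g differentiable at x \<longleftrightarrow> (deriv ^^ j) h differentiable at x"
    if "x \<in> U" for x j
  proof -
    have "\<forall>\<^sub>F y in nhds x. (deriv ^^ j) g y = (deriv ^^ j) h y"
      using assms(1) that deriv_eq eventually_nhds by blast
    then show ?thesis
      unfolding real_differentiable_def using DERIV_cong_ev by blast
  qed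
  moreover have "continuous_on U ((deriv ^^ n) g) \<longleftrightarrow> continuous_on U ((deriv ^^ n) h)"
    using continuous_on_cong deriv_eq by blast
  ultimately show ?thesis
    unfolding Ck_on_def by auto
qed

lemma Ck_on_SucI:
  assumes "open U" "\<And>x. x \<in> U \<Longrightarrow> g differentiable at x" "Ck_on n U g'"
    "\<And>x. x \<in> U \<Longrightarrow> deriv g x = g' x"
  shows "Ck_on (Suc n) U g"
  using assms Ck_on_cong[of U "deriv g" g' n] by (simp add: Ck_on_Suc)

lemma Ck_on_continuous_on_higher_deriv:
  assumes "Ck_on n U g" "j \<le> n"
  shows "continuous_on U ((deriv ^^ j) g)"
proof (cases "j < n")
  case True
  then have "\<forall>x\<in>U. (deriv ^^ j) g differentiable at x"
    using assms(1) by (simp add: Ck_on_def)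
  then show ?thesis
    by (meson continuous_at_imp_continuous_on differentiable_imp_continuous_within)
qed (use assms in \<open>simp add: Ck_on_def\<close>)

lemma Ck_on_imp_continuous_on: "Ck_on n U g \<Longrightarrow> continuous_on U g"
  using Ck_on_continuous_on_higher_deriv[of n U g 0] by simp

lemma Ck_on_mono: "Ck_on n U g \<Longrightarrow> m \<le> n \<Longrightarrow> Ck_on m U g"
  using Ck_on_continuous_on_higher_deriv unfolding Ck_on_def by fastforce

lemma Ck_on_const: "Ck_on n U (\<lambda>x. c)"
  by (induction n arbitrary: c) (simp_all add: Ck_on_0 Ck_on_Suc)

lemma Ck_on_ident: "Ck_on n U (\<lambda>x. x)"
  by (cases n) (simp_all add: Ck_on_0 Ck_on_Suc Ck_on_const)

lemma Ck_on_add: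
  "open U \<Longrightarrow> Ck_on n U f \<Longrightarrow> Ck_on n U g \<Longrightarrow> Ck_on n U (\<lambda>x. f x + g x)"
proof (induction n arbitrary: f g)
  case (Suc n)
  then show ?case
    by (intro Ck_on_SucI[where g' = "\<lambda>x. deriv f x + deriv g x"])
       (auto simp: Ck_on_Suc real_differentiable_imp_field_differentiable)
qed (simp add: Ck_on_0 continuous_on_add)

lemma Ck_on_mult:
  "open U \<Longrightarrow> Ck_on n U f \<Longrightarrow> Ck_on n U g \<Longrightarrow> Ck_on n U (\<lambda>x. f x * g x)"
proof (induction n arbitrary: f g)
  case (Suc n)
  have "Ck_on n U f" "Ck_on n U g"
    using Suc.prems Ck_on_mono le_SucI by blast+
  with Suc show ?case
    by (intro Ck_on_SucI[where g' = "\<lambda>x. f x * deriv g x + deriv f x * g x"] Ck_on_add)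
       (auto simp: Ck_on_Suc real_differentiable_imp_field_differentiable)
qed (simp add: Ck_on_0 continuous_on_mult)

lemma Ck_on_cmult: "open U \<Longrightarrow> Ck_on n U f \<Longrightarrow> Ck_on n U (\<lambda>x. c * f x)"
  using Ck_on_mult[OF _ Ck_on_const] by blast

lemma Ck_on_minus: "open U \<Longrightarrow> Ck_on n U f \<Longrightarrow> Ck_on n U (\<lambda>x. - f x)"
  using Ck_on_cmult[of U n f "-1"] by simp

lemma Ck_on_inverse:
  "open U \<Longrightarrow> Ck_on n U f \<Longrightarrow> (\<And>x. x \<in> U \<Longrightarrow> f x \<noteq> 0) \<Longrightarrow> Ck_on n U (\<lambda>x. inverse (f x))"
proof (induction n arbitrary: f)
  case (Suc n)
  have "Ck_on n U f"
    using Suc.prems(2) Ck_on_mono le_SucI by blast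
  then have "Ck_on n U (\<lambda>x. - deriv f x * (inverse (f x) * inverse (f x)))"
    using Suc by (intro Ck_on_mult Ck_on_minus) (auto simp: Ck_on_Suc)
  moreover have "(\<lambda>x. inverse (f x)) differentiable at x"
    and "deriv (\<lambda>x. inverse (f x)) x = - deriv f x * (inverse (f x) * inverse (f x))"
    if "x \<in> U" for x
    using Suc.prems that
    by (auto simp: Ck_on_Suc real_differentiable_imp_field_differentiable power2_eq_square
        divide_inverse intro: differentiable_inverse)
  ultimately show ?case
    using Ck_on_SucI[OF Suc.prems(1)] by blast
qed (simp add: Ck_on_0 continuous_on_inverse)

lemma Ck_on_compose:
  "open U \<Longrightarrow> open V \<Longrightarrow> Ck_on n V h \<Longrightarrow> Ck_on n U u \<Longrightarrow> u ` U \<subseteq> V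
    \<Longrightarrow> Ck_on n U (\<lambda>x. h (u x))"
proof (induction n arbitrary: h u)
  case 0
  then show ?case
    unfolding Ck_on_0 by (intro continuous_on_compose2[of V h U u]) auto
next
  case (Suc n)
  have "Ck_on n U u"
    using Suc.prems(4) Ck_on_mono le_SucI by blast
  then have "Ck_on n U (\<lambda>x. deriv h (u x) * deriv u x)"
    using Suc by (intro Ck_on_mult) (auto simp: Ck_on_Suc)
  moreover have "(\<lambda>x. h (u x)) differentiable at x"
    and "deriv (\<lambda>x. h (u x)) x = deriv h (u x) * deriv u x" if "x \<in> U" for x
    using Suc.prems that differentiable_chain_at[of u x h] real_derivative_chain[of u x h]
    by (auto simp: Ck_on_Suc o_def)
  ultimately show ?case
    using Ck_on_SucI[OF Suc.prems(1)] by blast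
qed

section \<open>Smooth functions of two variables\<close>

lemma iter_pd_Nil: "iter_pd [] f = f"
  and iter_pd_Cons_True: "iter_pd (True # ws) f = pdu (iter_pd ws f)"
  and iter_pd_Cons_False: "iter_pd (False # ws) f = pdv (iter_pd ws f)"
  by (simp_all add: iter_pd_def)

lemma smooth2_continuous_on:
  "smooth2 f \<Longrightarrow> continuous_on UNIV (\<lambda>z. iter_pd ws f (fst z) (snd z))"
  unfolding smooth2_def by blast

lemma smooth2_has_pdu:
  "smooth2 f \<Longrightarrow> ((\<lambda>t. iter_pd ws f t v) has_real_derivative pdu (iter_pd ws f) u v) (at u)"
  unfolding smooth2_def pdu_def using DERIV_deriv_iff_real_differentiable by blast

lemma smooth2_has_pdv:
  "smooth2 f \<Longrightarrow> ((\<lambda>t. iter_pd ws f u t) has_real_derivative pdv (iter_pd ws f) u v) (at v)"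
  unfolding smooth2_def pdv_def using DERIV_deriv_iff_real_differentiable by blast

lemma smooth2_has_derivative:
  assumes "smooth2 f"
  shows "((\<lambda>(x, y). iter_pd ws f x y) has_derivative
          (\<lambda>(dx, dy). pdu (iter_pd ws f) x0 y0 * dx + pdv (iter_pd ws f) x0 y0 * dy)) (at (x0, y0))"
proof -
  let ?F = "iter_pd ws f"
  have fst: "((\<lambda>x. ?F x y0) has_derivative (\<lambda>dx. pdu ?F x0 y0 * dx)) (at x0 within UNIV)"
    using smooth2_has_pdu[OF assms] by (simp add: has_field_derivative_def)
  have snd: "((\<lambda>y. ?F x y) has_derivative blinfun_apply (blinfun_mult_right (pdv ?F x y)))
      (at y within UNIV)" for x y
    using smooth2_has_pdv[OF assms] by (simp add: has_field_derivative_def)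
  have "continuous_on UNIV (\<lambda>z. blinfun_mult_right (pdv ?F (fst z) (snd z)))"
    using smooth2_continuous_on[OF assms, of "False # ws"]
    by (intro continuous_intros) (simp add: iter_pd_Cons_False)
  then have "continuous (at (x0, y0) within UNIV \<times> UNIV) (\<lambda>(x, y). blinfun_mult_right (pdv ?F x y))"
    by (simp add: split_def continuous_on_eq_continuous_within)
  from has_derivative_partialsI[OF fst snd this]
  show ?thesis
    by simp
qed

lemma smooth2_has_real_derivative_comp:
  assumes "smooth2 f" "(\<alpha> :: real \<Rightarrow> real) differentiable at t" "(\<beta> :: real \<Rightarrow> real) differentiable at t"
  shows "((\<lambda>s. iter_pd ws f (\<alpha> s) (\<beta> s)) has_real_derivative
      pdu (iter_pd ws f) (\<alpha> t) (\<beta> t) * deriv \<alpha> t + pdv (iter_pd ws f) (\<alpha> t) (\<beta> t) * deriv \<beta> t) (at t)"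
proof -
  have "((\<lambda>s. (\<alpha> s, \<beta> s)) has_derivative (\<lambda>h. (deriv \<alpha> t * h, deriv \<beta> t * h))) (at t)"
    using assms(2,3) by (intro has_derivative_Pair)
      (simp_all add: DERIV_deriv_iff_real_differentiable[symmetric] has_field_derivative_def)
  note chain = has_derivative_compose[OF this smooth2_has_derivative[OF assms(1), of ws]]
  show ?thesis
    unfolding has_field_derivative_def
    by (rule has_derivative_eq_rhs[OF chain[simplified]]) (auto simp: algebra_simps)
qed

lemma Ck_on_smooth2_compose:
  assumes "smooth2 f" "open U"
  shows "Ck_on n U \<alpha> \<Longrightarrow> Ck_on n U \<beta> \<Longrightarrow> Ck_on n U (\<lambda>t. iter_pd ws f (\<alpha> t) (\<beta> t))"
proof (induction n arbitrary: ws \<alpha> \<beta>)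
  case 0
  then show ?case
    using continuous_on_compose2[OF smooth2_continuous_on[OF assms(1)], of U "\<lambda>t. (\<alpha> t, \<beta> t)"]
    by (simp add: Ck_on_0 continuous_on_Pair)
next
  case (Suc n)
  have "Ck_on n U \<alpha>" "Ck_on n U \<beta>"
    using Suc.prems Ck_on_mono le_SucI by blast+
  then have "Ck_on n U (\<lambda>t. iter_pd (True # ws) f (\<alpha> t) (\<beta> t) * deriv \<alpha> t
      + iter_pd (False # ws) f (\<alpha> t) (\<beta> t) * deriv \<beta> t)"
    using Suc assms(2) by (intro Ck_on_add Ck_on_mult) (auto simp: Ck_on_Suc)
  moreover have "(\<lambda>t. iter_pd ws f (\<alpha> t) (\<beta> t)) differentiable at x"
    and "deriv (\<lambda>t. iter_pd ws f (\<alpha> t) (\<beta> t)) x = iter_pd (True # ws) f (\<alpha> x) (\<beta> x) * deriv \<alpha> x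
      + iter_pd (False # ws) f (\<alpha> x) (\<beta> x) * deriv \<beta> x" if "x \<in> U" for x
    using smooth2_has_real_derivative_comp[OF assms(1), of \<alpha> x \<beta> ws] Suc.prems that
    by (auto simp: Ck_on_Suc iter_pd_Cons_True iter_pd_Cons_False real_differentiable_def
        intro: DERIV_imp_deriv)
  ultimately show ?case
    using Ck_on_SucI[OF assms(2)] by blast
qed

section \<open>The implicit function\<close>

lemma isCont_zero_of_increasing_family:
  fixes F :: "real \<Rightarrow> real \<Rightarrow> real"
  assumes cont: "\<And>v. continuous_on UNIV (\<lambda>u. F u v)"
    and "open D" "u0 \<in> D" "a < g u0" "g u0 < b"
    and mono: "\<And>u v w. u \<in> D \<Longrightarrow> a \<le> v \<Longrightarrow> v < w \<Longrightarrow> w \<le> b \<Longrightarrow> F u v < F u w"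
    and zero: "\<And>u. u \<in> D \<Longrightarrow> a \<le> g u \<and> g u \<le> b \<and> F u (g u) = 0"
  shows "isCont g u0"
  unfolding continuous_at_eps_delta
proof (intro allI impI)
  fix \<epsilon> :: real assume "\<epsilon> > 0"
  define \<epsilon>' where "\<epsilon>' = min \<epsilon> (min (g u0 - a) (b - g u0))"
  have \<epsilon>': "0 < \<epsilon>'" "\<epsilon>' \<le> \<epsilon>" "a \<le> g u0 - \<epsilon>'" "g u0 + \<epsilon>' \<le> b"
    using \<open>\<epsilon> > 0\<close> assms(4,5) by (auto simp: \<epsilon>'_def)
  let ?S = "{u. F u (g u0 - \<epsilon>') < 0} \<inter> {u. 0 < F u (g u0 + \<epsilon>')} \<inter> D"
  have "open ?S"
    by (intro open_Int open_Collect_less continuous_on_const cont \<open>open D\<close>)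
  moreover have "u0 \<in> ?S"
    using zero[OF \<open>u0 \<in> D\<close>] mono[OF \<open>u0 \<in> D\<close>, of "g u0 - \<epsilon>'" "g u0"]
      mono[OF \<open>u0 \<in> D\<close>, of "g u0" "g u0 + \<epsilon>'"] \<epsilon>' \<open>u0 \<in> D\<close>
    by auto
  ultimately obtain d where "d > 0" and d: "ball u0 d \<subseteq> ?S"
    by (meson openE)
  have "\<bar>g u - g u0\<bar> < \<epsilon>'" if "dist u u0 < d" for u
  proof -
    have u: "u \<in> D" "F u (g u0 - \<epsilon>') < 0" "0 < F u (g u0 + \<epsilon>')"
      using d that by (auto simp: dist_commute)
    have "g u < g u0 + \<epsilon>'"
    proof (rule ccontr)
      assume "\<not> g u < g u0 + \<epsilon>'"
      then have "g u0 + \<epsilon>' < g u \<or> g u0 + \<epsilon>' = g u"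
        by auto
      then show False
        using u zero[OF u(1)] mono[OF u(1), of "g u0 + \<epsilon>'" "g u"] \<epsilon>' by auto
    qed
    moreover have "g u0 - \<epsilon>' < g u"
    proof (rule ccontr)
      assume "\<not> g u0 - \<epsilon>' < g u"
      then have "g u < g u0 - \<epsilon>' \<or> g u = g u0 - \<epsilon>'"
        by auto
      then show False
        using u zero[OF u(1)] mono[OF u(1), of "g u" "g u0 - \<epsilon>'"] \<epsilon>' by auto
    qed
    ultimately show ?thesis
      by linarith
  qed
  then show "\<exists>d>0. \<forall>u. dist u u0 < d \<longrightarrow> dist (g u) (g u0) < \<epsilon>"
    using \<open>d > 0\<close> \<epsilon>' by (force simp: dist_real_def)
qed

lemma implicit_function_continuous:
  fixes F :: "real \<Rightarrow> real \<Rightarrow> real"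
  assumes "r > 0" "F 0 0 = 0"
    and cont: "continuous_on UNIV (\<lambda>z. F (fst z) (snd z))"
    and mono: "\<And>u v w. \<bar>u\<bar> \<le> r \<Longrightarrow> - r \<le> v \<Longrightarrow> v < w \<Longrightarrow> w \<le> r \<Longrightarrow> F u v < F u w"
  obtains \<rho> g where "0 < \<rho>" "\<rho> \<le> r"
    "\<And>u. \<bar>u\<bar> < \<rho> \<Longrightarrow> \<bar>g u\<bar> \<le> r \<and> F u (g u) = 0"
    "\<And>u v. \<bar>u\<bar> < \<rho> \<Longrightarrow> \<bar>v\<bar> \<le> r \<Longrightarrow> F u v = 0 \<Longrightarrow> v = g u"
    "\<And>u. \<bar>u\<bar> < \<rho> \<Longrightarrow> isCont g u"
proof -
  have "continuous_on S (\<lambda>u. (u, v))" "continuous_on S (\<lambda>v. (u, v))"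
    for S :: "real set" and u v :: real
    by (intro continuous_intros)+
  then have cont_fst: "continuous_on S (\<lambda>u. F u v)" and cont_snd: "continuous_on S (F u)" for S u v
    using continuous_on_compose2[OF cont] by fastforce+
  have "open ({u. F u (- r) < 0} \<inter> {u. 0 < F u r})"
    by (intro open_Int open_Collect_less continuous_on_const cont_fst)
  moreover have "0 \<in> {u. F u (- r) < 0} \<inter> {u. 0 < F u r}"
    using assms mono[of 0 0 r] mono[of 0 "- r" 0] by auto
  ultimately obtain e where "e > 0" and e: "ball 0 e \<subseteq> {u. F u (- r) < 0} \<inter> {u. 0 < F u r}"
    by (meson openE)
  define \<rho> where "\<rho> = min e r"
  have \<rho>: "0 < \<rho>" "\<rho> \<le> r"
    using \<open>e > 0\<close> \<open>r > 0\<close> by (auto simp: \<rho>_def)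
  have ends: "F u (- r) < 0" "0 < F u r" if "\<bar>u\<bar> < \<rho>" for u
    using that e by (auto simp: \<rho>_def subset_iff)
  have ex1: "\<exists>!v. \<bar>v\<bar> \<le> r \<and> F u v = 0" if "\<bar>u\<bar> < \<rho>" for u
  proof -
    have "\<exists>v. - r \<le> v \<and> v \<le> r \<and> F u v = 0"
      using IVT'[of "F u" "- r" 0 r] ends[OF that] \<open>r > 0\<close> cont_snd by force
    moreover have "F u v < F u w" if "\<bar>v\<bar> \<le> r" "\<bar>w\<bar> \<le> r" "v < w" for v w
      using mono[of u v w] that \<open>\<bar>u\<bar> < \<rho>\<close> \<rho> by auto
    ultimately show ?thesis
      by (metis abs_le_iff less_irrefl linorder_neqE_linordered_idom minus_le_iff)
  qed
  define g where "g u = (THE v. \<bar>v\<bar> \<le> r \<and> F u v = 0)" for u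
  have zero: "\<bar>g u\<bar> \<le> r \<and> F u (g u) = 0" if "\<bar>u\<bar> < \<rho>" for u
    unfolding g_def using ex1[OF that] by (rule theI')
  have unique: "v = g u" if "\<bar>u\<bar> < \<rho>" "\<bar>v\<bar> \<le> r" "F u v = 0" for u v
    using ex1[OF that(1)] zero[OF that(1)] that(2,3) by blast
  have "isCont g u" if "\<bar>u\<bar> < \<rho>" for u
  proof (rule isCont_zero_of_increasing_family[where D = "ball 0 \<rho>" and a = "- r" and b = r])
    show "- r < g u" "g u < r"
      using zero[OF that] ends[OF that] by (smt (verit))+
    show "F x v < F x w" if "x \<in> ball 0 \<rho>" "- r \<le> v" "v < w" "w \<le> r" for x v w
      using mono[of x v w] that \<rho> by simp
    show "- r \<le> g x \<and> g x \<le> r \<and> F x (g x) = 0" if "x \<in> ball 0 \<rho>" for x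
      using zero[of x] that by (simp add: abs_le_iff)
  qed (use cont_fst that in auto)
  with \<rho> zero unique show ?thesis
    using that by blast
qed

lemma slope_le_of_linear_estimate:
  fixes A B e du dv :: real
  assumes "B \<noteq> 0" "du \<noteq> 0" "0 \<le> e" "e \<le> \<bar>B\<bar> / 2"
    and lin: "\<bar>A * du + B * dv\<bar> \<le> e * (\<bar>du\<bar> + \<bar>dv\<bar>)"
  shows "\<bar>dv / du + A / B\<bar> \<le> 2 * (\<bar>B\<bar> + \<bar>A\<bar>) / B\<^sup>2 * e"
proof -
  let ?X = "\<bar>A * du + B * dv\<bar>"
  have "\<bar>B\<bar> * \<bar>dv\<bar> \<le> ?X + \<bar>A\<bar> * \<bar>du\<bar>"
    using abs_triangle_ineq4[of "A * du + B * dv" "A * du"] by (simp add: abs_mult)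
  moreover have "2 * e * \<bar>du\<bar> \<le> \<bar>B\<bar> * \<bar>du\<bar>" "2 * e * \<bar>dv\<bar> \<le> \<bar>B\<bar> * \<bar>dv\<bar>"
    using assms(4) by (simp_all add: mult_right_mono)
  moreover have "?X \<le> e * \<bar>du\<bar> + e * \<bar>dv\<bar>"
    using lin by (simp add: distrib_left)
  ultimately have "\<bar>dv\<bar> * \<bar>B\<bar> \<le> (\<bar>B\<bar> + 2 * \<bar>A\<bar>) * \<bar>du\<bar>"
    by (simp add: algebra_simps)
  then have "e * \<bar>dv\<bar> \<le> e * ((\<bar>B\<bar> + 2 * \<bar>A\<bar>) / \<bar>B\<bar> * \<bar>du\<bar>)"
    using assms(1,3) by (intro mult_left_mono) (simp_all add: field_simps)
  with lin have "?X \<le> e * \<bar>du\<bar> + e * ((\<bar>B\<bar> + 2 * \<bar>A\<bar>) / \<bar>B\<bar> * \<bar>du\<bar>)"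
    by (simp add: distrib_left)
  also have "\<dots> = 2 * e * (\<bar>B\<bar> + \<bar>A\<bar>) / \<bar>B\<bar> * \<bar>du\<bar>"
    using assms(1) by (simp add: field_simps)
  finally have "?X / (\<bar>B\<bar> * \<bar>du\<bar>) \<le> (2 * e * (\<bar>B\<bar> + \<bar>A\<bar>) / \<bar>B\<bar> * \<bar>du\<bar>) / (\<bar>B\<bar> * \<bar>du\<bar>)"
    by (rule divide_right_mono) simp
  also have "\<dots> = 2 * (\<bar>B\<bar> + \<bar>A\<bar>) / \<bar>B\<bar>\<^sup>2 * e"
    using assms(1,2) by (simp add: field_simps power2_eq_square del: power2_abs abs_mult_self_eq)
  moreover have "dv / du + A / B = (A * du + B * dv) / (B * du)"
    using assms(1,2) by (simp add: field_simps)
  then have "\<bar>dv / du + A / B\<bar> = ?X / (\<bar>B\<bar> * \<bar>du\<bar>)"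
    by (simp add: abs_mult)
  ultimately show ?thesis
    by simp
qed

lemma implicit_function_has_derivative:
  fixes F :: "real \<times> real \<Rightarrow> real" and g :: "real \<Rightarrow> real"
  assumes F': "(F has_derivative (\<lambda>(dx, dy). A * dx + B * dy)) (at (u0, g u0))" and "B \<noteq> 0"
    and "isCont g u0" and level: "\<forall>\<^sub>F u in at u0. F (u, g u) = F (u0, g u0)"
  shows "(g has_real_derivative - A / B) (at u0)"
proof -
  let ?p = "(u0, g u0)" and ?L = "\<lambda>(dx, dy). A * dx + B * dy"
  let ?R = "\<lambda>u. \<bar>A * (u - u0) + B * (g u - g u0)\<bar> / norm (u - u0, g u - g u0)"
  have "filterlim (\<lambda>u. (u, g u)) (at ?p) (at u0)"
  proof (rule filterlim_atI)
    show "((\<lambda>u. (u, g u)) \<longlongrightarrow> ?p) (at u0)"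
      using \<open>isCont g u0\<close> by (intro tendsto_Pair tendsto_ident_at) (simp add: isCont_def)
  qed (simp add: eventually_at_filter)
  from filterlim_compose[OF _ this] F'
  have "((\<lambda>u. norm (F (u, g u) - F ?p - ?L ((u, g u) - ?p)) / norm ((u, g u) - ?p)) \<longlongrightarrow> 0) (at u0)"
    unfolding has_derivative_iff_norm by blast
  then have remainder: "(?R \<longlongrightarrow> 0) (at u0)"
    by (rule Lim_transform_eventually) (use level in \<open>auto elim: eventually_mono\<close>)
  have "\<forall>\<^sub>F u in at u0. ?R u < \<bar>B\<bar> / 2"
    by (rule order_tendstoD(2)[OF remainder]) (use \<open>B \<noteq> 0\<close> in simp)
  moreover have "\<forall>\<^sub>F u in at u0. u \<noteq> u0"
    by (simp add: eventually_at_filter)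
  ultimately have "\<forall>\<^sub>F u in at u0.
      norm ((g u - g u0) / (u - u0) + A / B) \<le> 2 * (\<bar>B\<bar> + \<bar>A\<bar>) / B\<^sup>2 * ?R u"
  proof eventually_elim
    case (elim u)
    have "0 < norm (u - u0, g u - g u0)"
      using elim(2) by (simp add: zero_prod_def)
    then have "\<bar>A * (u - u0) + B * (g u - g u0)\<bar> = ?R u * norm (u - u0, g u - g u0)"
      by simp
    also have "\<dots> \<le> ?R u * (\<bar>u - u0\<bar> + \<bar>g u - g u0\<bar>)"
      by (rule mult_left_mono) (use norm_Pair_le[of "u - u0" "g u - g u0"] in simp_all)
    finally have lin: "\<bar>A * (u - u0) + B * (g u - g u0)\<bar> \<le> ?R u * (\<bar>u - u0\<bar> + \<bar>g u - g u0\<bar>)" .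
    have "u - u0 \<noteq> 0" "0 \<le> ?R u" "?R u \<le> \<bar>B\<bar> / 2"
      using elim by simp_all
    from slope_le_of_linear_estimate[OF \<open>B \<noteq> 0\<close> this lin]
    show ?case
      by simp
  qed
  moreover have "((\<lambda>u. 2 * (\<bar>B\<bar> + \<bar>A\<bar>) / B\<^sup>2 * ?R u) \<longlongrightarrow> 0) (at u0)"
    using tendsto_mult_right_zero[OF remainder] .
  ultimately have "((\<lambda>u. (g u - g u0) / (u - u0) + A / B) \<longlongrightarrow> 0) (at u0)"
    by (rule Lim_null_comparison)
  then show ?thesis
    unfolding has_field_derivative_iff
    using Lim_null[of "\<lambda>u. (g u - g u0) / (u - u0)" "- A / B" "at u0"] by simp
qed

lemma smooth2_pdv_pos_near:
  assumes "smooth2 f" "pdv f 0 0 > 0"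
  obtains r where "r > 0" "\<And>u v. \<bar>u\<bar> \<le> r \<Longrightarrow> \<bar>v\<bar> \<le> r \<Longrightarrow> pdv f u v > 0"
proof -
  have "continuous_on UNIV (\<lambda>z. pdv f (fst z) (snd z))"
    using smooth2_continuous_on[OF assms(1), of "[False]"] by (simp add: iter_pd_Cons_False iter_pd_Nil)
  then have "open {z. 0 < pdv f (fst z) (snd z)}"
    by (intro open_Collect_less continuous_on_const)
  moreover have "0 \<in> {z. 0 < pdv f (fst z) (snd z)}"
    using assms(2) by simp
  ultimately obtain e where "e > 0" and e: "ball 0 e \<subseteq> {z. 0 < pdv f (fst z) (snd z)}"
    by (meson openE)
  have "pdv f u v > 0" if "\<bar>u\<bar> \<le> e / 3" "\<bar>v\<bar> \<le> e / 3" for u v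
  proof -
    have "(u, v) \<in> ball 0 e"
      using norm_Pair_le[of u v] that \<open>e > 0\<close> by simp
    then show ?thesis
      using e by auto
  qed
  then show ?thesis
    using that[of "e / 3"] \<open>e > 0\<close> by simp
qed

lemma smooth2_increasing_snd:
  assumes "smooth2 f" "v < w" "\<And>x. v \<le> x \<Longrightarrow> x \<le> w \<Longrightarrow> pdv f u x > 0"
  shows "f u v < f u w"
proof (rule DERIV_pos_imp_increasing[of v w "f u"])
  show "\<exists>y. (f u has_real_derivative y) (at x) \<and> 0 < y" if "v \<le> x" "x \<le> w" for x
    using smooth2_has_pdv[OF assms(1), of "[]" u x] assms(3)[OF that] by (auto simp: iter_pd_Nil)
qed (rule \<open>v < w\<close>)

lemma Ck_on_implicit_function:
  assumes "smooth2 f" "open U"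
    and pdv_ne: "\<And>x. x \<in> U \<Longrightarrow> pdv f x (g x) \<noteq> 0"
    and g_deriv: "\<And>x. x \<in> U \<Longrightarrow> (g has_real_derivative - pdu f x (g x) / pdv f x (g x)) (at x)"
  shows "Ck_on n U g"
proof (induction n)
  case 0
  show ?case
    unfolding Ck_on_0 using g_deriv
    by (intro continuous_at_imp_continuous_on) (auto intro: DERIV_isCont)
next
  case (Suc n)
  have "Ck_on n U (\<lambda>x. - iter_pd [True] f x (g x) * inverse (iter_pd [False] f x (g x)))"
    using pdv_ne
    by (intro Ck_on_mult Ck_on_minus Ck_on_inverse Ck_on_smooth2_compose[OF assms(1)]
        Ck_on_ident Suc.IH \<open>open U\<close>) (simp_all add: iter_pd_Cons_False iter_pd_Nil)
  moreover have "g differentiable at x"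
    and "deriv g x = - iter_pd [True] f x (g x) * inverse (iter_pd [False] f x (g x))"
    if "x \<in> U" for x
    using g_deriv[OF that]
    by (auto simp: real_differentiable_def DERIV_imp_deriv iter_pd_Cons_True
        iter_pd_Cons_False iter_pd_Nil divide_inverse)
  ultimately show ?case
    using Ck_on_SucI[OF \<open>open U\<close>] by blast
qed

lemma smooth2_implicit_function:
  assumes "smooth2 f" "f 0 0 = 0" "pdv f 0 0 > 0"
  obtains \<rho> r g where "0 < \<rho>" "\<rho> \<le> r"
    "\<And>u. \<bar>u\<bar> < \<rho> \<Longrightarrow> f u (g u) = 0"
    "\<And>u v. \<bar>u\<bar> < \<rho> \<Longrightarrow> \<bar>v\<bar> \<le> r \<Longrightarrow> f u v = 0 \<Longrightarrow> v = g u"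
    "\<And>n. Ck_on n (ball 0 \<rho>) g" "g 0 = 0" "deriv g 0 = - pdu f 0 0 / pdv f 0 0"
proof -
  obtain r where "r > 0" and pdv_pos: "\<And>u v. \<bar>u\<bar> \<le> r \<Longrightarrow> \<bar>v\<bar> \<le> r \<Longrightarrow> pdv f u v > 0"
    using smooth2_pdv_pos_near[OF assms(1,3)] by blast
  have mono: "f u v < f u w" if "\<bar>u\<bar> \<le> r" "- r \<le> v" "v < w" "w \<le> r" for u v w
    using pdv_pos[of u] that by (intro smooth2_increasing_snd[OF assms(1) that(3)]) (simp add: abs_le_iff)
  have cont: "continuous_on UNIV (\<lambda>z. f (fst z) (snd z))"
    using smooth2_continuous_on[OF assms(1), of "[]"] by (simp add: iter_pd_Nil)
  obtain \<rho> g where "0 < \<rho>" "\<rho> \<le> r" and zero: "\<And>u. \<bar>u\<bar> < \<rho> \<Longrightarrow> \<bar>g u\<bar> \<le> r \<and> f u (g u) = 0"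
    and unique: "\<And>u v. \<bar>u\<bar> < \<rho> \<Longrightarrow> \<bar>v\<bar> \<le> r \<Longrightarrow> f u v = 0 \<Longrightarrow> v = g u"
    and g_cont: "\<And>u. \<bar>u\<bar> < \<rho> \<Longrightarrow> isCont g u"
    using implicit_function_continuous[OF \<open>r > 0\<close> assms(2) cont mono] by blast
  have g_deriv: "(g has_real_derivative - pdu f u (g u) / pdv f u (g u)) (at u)" if "\<bar>u\<bar> < \<rho>" for u
  proof (rule implicit_function_has_derivative[where F = "\<lambda>(x, y). f x y"])
    show "((\<lambda>(x, y). f x y) has_derivative (\<lambda>(dx, dy). pdu f u (g u) * dx + pdv f u (g u) * dy))
        (at (u, g u))"
      using smooth2_has_derivative[OF assms(1), of "[]"] by (simp add: iter_pd_Nil)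
    show "pdv f u (g u) \<noteq> 0"
      using pdv_pos[of u "g u"] zero[OF that] \<open>\<rho> \<le> r\<close> that by simp
    have "\<forall>\<^sub>F x in nhds u. \<bar>x\<bar> < \<rho>"
      using eventually_nhds_in_open[of "ball 0 \<rho>" u] that by (simp add: dist_real_def)
    then have "\<forall>\<^sub>F x in nhds u. f x (g x) = f u (g u)"
      by eventually_elim (simp add: zero that)
    then show "\<forall>\<^sub>F x in at u. (\<lambda>(x, y). f x y) (x, g x) = (\<lambda>(x, y). f x y) (u, g u)"
      unfolding eventually_at_filter by (auto elim: eventually_mono)
  qed (rule g_cont[OF that])
  have "Ck_on n (ball 0 \<rho>) g" for n
  proof (rule Ck_on_implicit_function[OF assms(1) open_ball])
    show "pdv f x (g x) \<noteq> 0" if "x \<in> ball 0 \<rho>" for x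
      using pdv_pos[of x "g x"] zero[of x] that \<open>\<rho> \<le> r\<close> by (simp add: dist_real_def)
  qed (use g_deriv in \<open>simp add: dist_real_def\<close>)
  moreover have "g 0 = 0"
    using unique[of 0 0] \<open>0 < \<rho>\<close> \<open>\<rho> \<le> r\<close> assms(2) by simp
  moreover have "deriv g 0 = - pdu f 0 0 / pdv f 0 0"
    using DERIV_imp_deriv[OF g_deriv[of 0]] \<open>0 < \<rho>\<close> \<open>g 0 = 0\<close> by simp
  ultimately show ?thesis
    using that \<open>0 < \<rho>\<close> \<open>\<rho> \<le> r\<close> zero unique by blast
qed

section \<open>Hadamard's lemma\<close>

lemma mult_mem_ball_0:
  assumes "x \<in> ball 0 \<rho>" "t \<in> {0..1}"
  shows "t * x \<in> ball (0 :: real) \<rho>"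
proof -
  have "\<bar>t * x\<bar> \<le> \<bar>x\<bar>"
    using assms(2) by (simp add: abs_mult mult_left_le_one_le)
  then show ?thesis
    using assms(1) by simp
qed

lemma continuous_on_scaled_integrand:
  fixes G :: "real \<Rightarrow> real"
  assumes "continuous_on (ball 0 \<rho>) G"
  shows "continuous_on (ball 0 \<rho> \<times> cbox 0 1) (\<lambda>(x, t). t ^ m * G (t * x))"
proof -
  have "continuous_on (ball 0 \<rho> \<times> cbox 0 1) (\<lambda>z. G (snd z * fst z))"
  proof (rule continuous_on_compose2[OF assms])
    show "continuous_on (ball 0 \<rho> \<times> cbox 0 1) (\<lambda>z :: real \<times> real. snd z * fst z)"
      by (intro continuous_intros)
  qed (auto simp: cbox_interval intro: mult_mem_ball_0)
  then have "continuous_on (ball 0 \<rho> \<times> cbox 0 1) (\<lambda>z. snd z ^ m * G (snd z * fst z))"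
    by (intro continuous_on_mult continuous_on_power continuous_on_snd continuous_on_id)
  then show ?thesis
    by (simp add: split_def)
qed

text \<open>The weight t^m makes the statement stable under differentiation in x.\<close>

lemma Ck_on_integral_scaled:
  fixes G :: "real \<Rightarrow> real"
  shows "Ck_on n (ball 0 \<rho>) G \<Longrightarrow> Ck_on n (ball 0 \<rho>) (\<lambda>x. integral {0..1} (\<lambda>t. t ^ m * G (t * x)))"
proof (induction n arbitrary: G m)
  case 0
  then show ?case
    using integral_continuous_on_param[OF continuous_on_scaled_integrand[of \<rho> G m]]
    by (simp add: Ck_on_0 cbox_interval)
next
  case (Suc n)
  have G': "(G has_real_derivative deriv G y) (at y)" if "y \<in> ball 0 \<rho>" for y
    using Suc.prems that by (auto simp: Ck_on_Suc DERIV_deriv_iff_real_differentiable)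
  have cont_G: "continuous_on (ball 0 \<rho>) G"
    using Suc.prems by (rule Ck_on_imp_continuous_on)
  have cont_G': "continuous_on (ball 0 \<rho>) (deriv G)"
    using Suc.prems Ck_on_imp_continuous_on by (auto simp: Ck_on_Suc)
  have deriv_integral: "((\<lambda>x. integral {0..1} (\<lambda>t. t ^ m * G (t * x))) has_real_derivative
      integral {0..1} (\<lambda>t. t ^ Suc m * deriv G (t * x))) (at x)" if x: "x \<in> ball 0 \<rho>" for x
  proof -
    have "((\<lambda>x. t ^ m * G (t * x)) has_real_derivative t ^ Suc m * deriv G (t * y))
        (at y within ball 0 \<rho>)" if "y \<in> ball 0 \<rho>" "t \<in> cbox 0 1" for y t
    proof -
      have "t * y \<in> ball 0 \<rho>"
        using that mult_mem_ball_0 by (simp add: cbox_interval)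
      from DERIV_cmult[OF DERIV_chain2[OF G'[OF this] DERIV_cmult_Id[of t y]], of "t ^ m"]
      show ?thesis
        by (simp add: has_field_derivative_at_within algebra_simps)
    qed
    moreover have "(\<lambda>t. t ^ m * G (t * y)) integrable_on cbox 0 1" if "y \<in> ball 0 \<rho>" for y
    proof (rule integrable_continuous)
      show "continuous_on (cbox 0 1) (\<lambda>t. t ^ m * G (t * y))"
        by (intro continuous_intros continuous_on_compose2[OF cont_G])
           (auto simp: cbox_interval intro: mult_mem_ball_0 that)
    qed
    ultimately have "((\<lambda>x. integral (cbox 0 1) (\<lambda>t. t ^ m * G (t * x))) has_real_derivative
        integral (cbox 0 1) (\<lambda>t. t ^ Suc m * deriv G (t * x))) (at x within ball 0 \<rho>)"
      by (rule leibniz_rule_field_derivative[OF _ _ continuous_on_scaled_integrand[OF cont_G'] x convex_ball])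
    then show ?thesis
      using at_within_open[OF x open_ball] by (simp add: cbox_interval)
  qed
  have "Ck_on n (ball 0 \<rho>) (\<lambda>x. integral {0..1} (\<lambda>t. t ^ Suc m * deriv G (t * x)))"
    using Suc.IH[of "deriv G" "Suc m"] Suc.prems unfolding Ck_on_Suc by blast
  moreover have "(\<lambda>x. integral {0..1} (\<lambda>t. t ^ m * G (t * x))) differentiable at x"
    and "deriv (\<lambda>x. integral {0..1} (\<lambda>t. t ^ m * G (t * x))) x
      = integral {0..1} (\<lambda>t. t ^ Suc m * deriv G (t * x))" if "x \<in> ball 0 \<rho>" for x
    using deriv_integral[OF that] by (auto simp: real_differentiable_def intro: DERIV_imp_deriv)
  ultimately show ?case
    using Ck_on_SucI[OF open_ball] by blast
qed

lemma hadamard_factorization: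
  fixes g :: "real \<Rightarrow> real"
  assumes "Ck_on (Suc k) (ball 0 \<rho>) g" "g 0 = 0"
  obtains h where "Ck_on k (ball 0 \<rho>) h" "\<And>x. x \<in> ball 0 \<rho> \<Longrightarrow> g x = x * h x" "h 0 = deriv g 0"
proof
  define h where "h x = integral {0..1} (\<lambda>t. t ^ 0 * deriv g (t * x))" for x
  show "Ck_on k (ball 0 \<rho>) h"
    unfolding h_def using assms(1) by (intro Ck_on_integral_scaled) (simp add: Ck_on_Suc)
  show "h 0 = deriv g 0"
    by (simp add: h_def)
  show "g x = x * h x" if x: "x \<in> ball 0 \<rho>" for x
  proof -
    have "((\<lambda>t. g (t * x)) has_vector_derivative x * deriv g (t * x)) (at t within {0..1})"
      if "t \<in> {0..1}" for t
    proof -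
      have "(g has_real_derivative deriv g (t * x)) (at (t * x))"
        using assms(1) mult_mem_ball_0[OF x that]
        by (auto simp: Ck_on_Suc DERIV_deriv_iff_real_differentiable)
      moreover have "((\<lambda>t. t * x) has_real_derivative x) (at t)"
        by (auto intro!: derivative_eq_intros)
      ultimately have "((\<lambda>t. g (t * x)) has_real_derivative x * deriv g (t * x)) (at t)"
        by (auto dest: DERIV_chain2 simp: mult.commute)
      then show ?thesis
        by (simp add: has_real_derivative_iff_has_vector_derivative[symmetric] has_field_derivative_at_within)
    qed
    then have "((\<lambda>t. x * deriv g (t * x)) has_integral g (1 * x) - g (0 * x)) {0..1}"
      by (intro fundamental_theorem_of_calculus) auto
    then have "((\<lambda>t. x * deriv g (t * x)) has_integral g x) {0..1}"
      using assms(2) by simp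
    from integral_unique[OF this] show ?thesis
      by (simp add: h_def)
  qed
qed

section \<open>Higher derivatives of products and vanishing order\<close>

lemma higher_deriv_add_Ck_on:
  assumes "open U" "Ck_on j U A" "Ck_on j U B" "x \<in> U"
  shows "(deriv ^^ j) (\<lambda>x. A x + B x) x = (deriv ^^ j) A x + (deriv ^^ j) B x"
  using assms(2-4)
proof (induction j arbitrary: A B x)
  case (Suc j)
  have "\<forall>y\<in>U. deriv (\<lambda>x. A x + B x) y = deriv A y + deriv B y"
    using Suc.prems by (auto simp: Ck_on_Suc real_differentiable_imp_field_differentiable)
  then have "\<forall>\<^sub>F y in nhds x. deriv (\<lambda>x. A x + B x) y = deriv A y + deriv B y"
    using assms(1) Suc.prems(3) eventually_nhds by blast
  then have "(deriv ^^ Suc j) (\<lambda>x. A x + B x) x = (deriv ^^ j) (\<lambda>y. deriv A y + deriv B y) x"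
    by (simp add: funpow_Suc_right higher_deriv_cong_ev del: funpow.simps)
  also have "\<dots> = (deriv ^^ j) (deriv A) x + (deriv ^^ j) (deriv B) x"
    using Suc.IH Suc.prems by (simp add: Ck_on_Suc)
  finally show ?case
    by (simp add: funpow_Suc_right del: funpow.simps)
qed simp

lemma higher_deriv_Suc_mult_Ck_on:
  assumes "open U" "Ck_on (Suc j) U A" "Ck_on (Suc j) U B" "x \<in> U"
  shows "(deriv ^^ Suc j) (\<lambda>x. A x * B x) x
    = (deriv ^^ j) (\<lambda>x. deriv A x * B x) x + (deriv ^^ j) (\<lambda>x. A x * deriv B x) x"
proof -
  have "\<forall>y\<in>U. deriv (\<lambda>x. A x * B x) y = deriv A y * B y + A y * deriv B y"
    using assms by (auto simp: Ck_on_Suc real_differentiable_imp_field_differentiable)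
  then have "\<forall>\<^sub>F y in nhds x. deriv (\<lambda>x. A x * B x) y = deriv A y * B y + A y * deriv B y"
    using assms(1,4) eventually_nhds by blast
  then have "(deriv ^^ Suc j) (\<lambda>x. A x * B x) x = (deriv ^^ j) (\<lambda>y. deriv A y * B y + A y * deriv B y) x"
    by (simp add: funpow_Suc_right higher_deriv_cong_ev del: funpow.simps)
  also have "\<dots> = (deriv ^^ j) (\<lambda>x. deriv A x * B x) x + (deriv ^^ j) (\<lambda>x. A x * deriv B x) x"
    using assms Ck_on_mono[OF assms(2)] Ck_on_mono[OF assms(3)]
    by (intro higher_deriv_add_Ck_on Ck_on_mult) (auto simp: Ck_on_Suc)
  finally show ?thesis .
qed

lemma bounded_mult_comp:
  fixes f g :: "'a \<Rightarrow> 'b :: real_normed_algebra"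
  assumes "bounded (f ` S)" "bounded (g ` S)"
  shows "bounded ((\<lambda>x. f x * g x) ` S)"
proof -
  obtain a b where "\<forall>x\<in>S. norm (f x) \<le> a" "\<forall>x\<in>S. norm (g x) \<le> b"
    using assms unfolding bounded_iff by fastforce
  then have "\<forall>x\<in>S. norm (f x * g x) \<le> a * b"
    by (metis norm_ge_zero norm_mult_ineq mult_mono order.trans)
  then show ?thesis
    unfolding bounded_iff by blast
qed

lemma bounded_higher_deriv_mult:
  assumes "open U" "S \<subseteq> U"
  shows "Ck_on j U A \<Longrightarrow> Ck_on j U B \<Longrightarrow> (\<forall>i\<le>j. bounded ((deriv ^^ i) A ` S)) \<Longrightarrow>
    (\<forall>i\<le>j. bounded ((deriv ^^ i) B ` S)) \<Longrightarrow> bounded ((deriv ^^ j) (\<lambda>x. A x * B x) ` S)"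
proof (induction j arbitrary: A B)
  case 0
  then show ?case
    using bounded_mult_comp[of A S B] by simp
next
  case (Suc j)
  have deriv_Suc: "(deriv ^^ Suc i) F = (deriv ^^ i) (deriv F)" for i and F :: "real \<Rightarrow> real"
    by (simp add: funpow_Suc_right del: funpow.simps)
  have "Ck_on j U A" "Ck_on j U B"
    using Suc.prems(1,2) Ck_on_mono le_SucI by blast+
  moreover have "Ck_on j U (deriv A)" "Ck_on j U (deriv B)"
    using Suc.prems(1,2) by (simp_all add: Ck_on_Suc)
  moreover have "\<forall>i\<le>j. bounded ((deriv ^^ i) (deriv A) ` S)" "\<forall>i\<le>j. bounded ((deriv ^^ i) A ` S)"
    and "\<forall>i\<le>j. bounded ((deriv ^^ i) (deriv B) ` S)" "\<forall>i\<le>j. bounded ((deriv ^^ i) B ` S)"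
    using Suc.prems(3,4) by (auto simp flip: deriv_Suc)
  ultimately have "bounded ((\<lambda>x. (deriv ^^ j) (\<lambda>x. deriv A x * B x) x
      + (deriv ^^ j) (\<lambda>x. A x * deriv B x) x) ` S)"
    using Suc.IH by (intro bounded_plus_comp) blast+
  moreover have "(deriv ^^ Suc j) (\<lambda>x. A x * B x) x
      = (deriv ^^ j) (\<lambda>x. deriv A x * B x) x + (deriv ^^ j) (\<lambda>x. A x * deriv B x) x" if "x \<in> S" for x
    using higher_deriv_Suc_mult_Ck_on[OF assms(1) Suc.prems(1,2)] that assms(2) by blast
  ultimately show ?case
    by (simp add: image_def)
qed

lemma bounded_higher_deriv_cball:
  assumes "open W" "cball 0 \<delta> \<subseteq> W" "Ck_on n W B" "j \<le> n" "S \<subseteq> cball (0 :: real) \<delta>"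
  shows "bounded ((deriv ^^ j) B ` S)"
proof -
  have "continuous_on (cball 0 \<delta>) ((deriv ^^ j) B)"
    using Ck_on_continuous_on_higher_deriv[OF assms(3,4)] assms(2) by (rule continuous_on_subset)
  then have "bounded ((deriv ^^ j) B ` cball 0 \<delta>)"
    by (intro compact_imp_bounded compact_continuous_image) simp_all
  then show ?thesis
    by (rule bounded_subset) (use assms(5) in auto)
qed

lemma vanishes_to_order_mult_Ck_on:
  assumes van: "vanishes_to_order k l U \<phi>" and "ball 0 \<delta> \<subseteq> U" "l \<le> real k"
    and "open W" "cball 0 \<delta> \<subseteq> W" "Ck_on k W B"
  shows "vanishes_to_order k l (ball 0 \<delta>) (\<lambda>s. \<phi> s * B s)"
proof -
  obtain \<phi>bar where \<phi>_eq: "\<forall>s\<in>U - {0}. \<phi> s = \<phi>bar s * \<bar>s\<bar> powr l"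
    and \<phi>bar_Ck: "Ck_on k (U - {0}) \<phi>bar"
    and \<phi>bar_bounded: "\<forall>j::nat. real j \<le> l \<longrightarrow> bounded ((deriv ^^ j) \<phi>bar ` ((U \<inter> {-1..1}) - {0}))"
    using van unfolding vanishes_to_order_def by blast
  define V where "V = ball (0 :: real) \<delta> - {0}"
  define S where "S = (ball (0 :: real) \<delta> \<inter> {-1..1}) - {0}"
  have "ball 0 \<delta> \<subseteq> W"
    using ball_subset_cball assms(5) by (rule subset_trans)
  then have "open V" "S \<subseteq> V" "V \<subseteq> U - {0}" "V \<subseteq> W" "S \<subseteq> cball 0 \<delta>" "S \<subseteq> (U \<inter> {-1..1}) - {0}"
    using assms(2) by (auto simp: V_def S_def)
  have Ck: "Ck_on k V \<phi>bar" "Ck_on k V B"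
    using Ck_on_subset \<phi>bar_Ck \<open>V \<subseteq> U - {0}\<close> assms(6) \<open>V \<subseteq> W\<close> by blast+
  show ?thesis
    unfolding vanishes_to_order_def
  proof (intro exI[of _ "\<lambda>s. \<phi>bar s * B s"] conjI allI impI ballI)
    show "\<phi> s * B s = \<phi>bar s * B s * \<bar>s\<bar> powr l" if "s \<in> ball 0 \<delta> - {0}" for s
      using \<phi>_eq that assms(2) by auto
    show "Ck_on k (ball 0 \<delta> - {0}) (\<lambda>s. \<phi>bar s * B s)"
      using Ck_on_mult[OF \<open>open V\<close> Ck] by (simp add: V_def)
  next
    fix j :: nat assume "real j \<le> l"
    then have "j \<le> k"
      using assms(3) by linarith
    have "bounded ((deriv ^^ i) \<phi>bar ` S)" if "i \<le> j" for i
    proof -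
      have "real i \<le> l"
        using that \<open>real j \<le> l\<close> by linarith
      then show ?thesis
        using \<phi>bar_bounded \<open>S \<subseteq> (U \<inter> {-1..1}) - {0}\<close> by (blast intro: bounded_subset image_mono)
    qed
    moreover have "bounded ((deriv ^^ i) B ` S)" if "i \<le> j" for i
      using bounded_higher_deriv_cball[OF assms(4,5,6) _ \<open>S \<subseteq> cball 0 \<delta>\<close>] that \<open>j \<le> k\<close> by simp
    ultimately have "bounded ((deriv ^^ j) (\<lambda>s. \<phi>bar s * B s) ` S)"
      using Ck Ck_on_mono \<open>j \<le> k\<close>
      by (intro bounded_higher_deriv_mult[OF \<open>open V\<close> \<open>S \<subseteq> V\<close>]) blast+
    then show "bounded ((deriv ^^ j) (\<lambda>s. \<phi>bar s * B s) ` (ball 0 \<delta> \<inter> {-1..1} - {0}))"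
      by (simp add: S_def)
  qed
qed

section \<open>The curves\<close>

lemma smooth2_zero_set_factored:
  assumes "smooth2 f" "f 0 0 = 0" "pdv f 0 0 > 0"
  obtains \<rho> r h where "0 < \<rho>" "\<rho> \<le> r" "Ck_on k (ball 0 \<rho>) h" "h 0 = - pdu f 0 0 / pdv f 0 0"
    "\<And>u. \<bar>u\<bar> < \<rho> \<Longrightarrow> f u (u * h u) = 0"
    "\<And>u v. \<bar>u\<bar> < \<rho> \<Longrightarrow> \<bar>v\<bar> \<le> r \<Longrightarrow> f u v = 0 \<Longrightarrow> v = u * h u"
proof -
  obtain \<rho> r g where "0 < \<rho>" "\<rho> \<le> r" and zero: "\<And>u. \<bar>u\<bar> < \<rho> \<Longrightarrow> f u (g u) = 0"
    and unique: "\<And>u v. \<bar>u\<bar> < \<rho> \<Longrightarrow> \<bar>v\<bar> \<le> r \<Longrightarrow> f u v = 0 \<Longrightarrow> v = g u"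
    and g_Ck: "\<And>n. Ck_on n (ball 0 \<rho>) g" and "g 0 = 0" and g'0: "deriv g 0 = - pdu f 0 0 / pdv f 0 0"
    by (rule smooth2_implicit_function[OF assms]) blast
  obtain h where h_Ck: "Ck_on k (ball 0 \<rho>) h" and g_eq: "\<And>u. u \<in> ball 0 \<rho> \<Longrightarrow> g u = u * h u"
    and h0: "h 0 = deriv g 0"
    using hadamard_factorization[OF g_Ck \<open>g 0 = 0\<close>] by blast
  have g_eq': "g u = u * h u" if "\<bar>u\<bar> < \<rho>" for u
    using g_eq[of u] that by (simp add: dist_real_def)
  show ?thesis
  proof (rule that[OF \<open>0 < \<rho>\<close> \<open>\<rho> \<le> r\<close> h_Ck])
    show "h 0 = - pdu f 0 0 / pdv f 0 0"
      using h0 g'0 by simp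
    show "f u (u * h u) = 0" if "\<bar>u\<bar> < \<rho>" for u
      using zero[OF that] g_eq'[OF that] by simp
    show "v = u * h u" if "\<bar>u\<bar> < \<rho>" "\<bar>v\<bar> \<le> r" "f u v = 0" for u v
      using unique[OF that] g_eq'[OF that(1)] by simp
  qed
qed

lemma graph_factor_of_sum_eq_minus_one:
  fixes h :: "real \<Rightarrow> real"
  assumes "\<rho> \<le> r" "h 0 = -1"
    and "\<And>u v. \<bar>u\<bar> < \<rho> \<Longrightarrow> \<bar>v\<bar> \<le> r \<Longrightarrow> u + v = 0 \<Longrightarrow> v = u * h u" "\<bar>u\<bar> < \<rho>"
  shows "h u = -1"
proof (cases "u = 0")
  case False
  have "- u = u * h u"
    using assms(3)[of u "- u"] assms(1,4) by simp
  then have "u * h u = u * -1"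
    by simp
  then show ?thesis
    using False mult_left_cancel by blast
qed (use assms(2) in simp)

lemma eventually_nhds_eq_if_eventually_at:
  fixes f g :: "real \<Rightarrow> real"
  assumes "isCont f x" "isCont g x" "\<forall>\<^sub>F y in at x. f y = g y"
  shows "\<forall>\<^sub>F y in nhds x. f y = g y"
proof -
  have "(g \<longlongrightarrow> f x) (at x)"
    using assms(1) tendsto_cong[OF assms(3)] by (simp add: isCont_def)
  then have "f x = g x"
    using assms(2) tendsto_unique[OF trivial_limit_at] by (auto simp: isCont_def)
  then show ?thesis
    using assms(3) by (simp add: eventually_nhds_conv_at)
qed

lemma eventually_eq_solution_along_curve:
  fixes U \<psi> \<psi>' :: "real \<Rightarrow> real"
  assumes graph: "\<And>u v. \<bar>u\<bar> < \<rho> \<Longrightarrow> \<bar>v\<bar> \<le> r \<Longrightarrow> F u v = 0 \<Longrightarrow> v = G u" and "0 < \<rho>" "0 < r"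
    and "isCont U 0" "U 0 = 0" "c \<noteq> 0"
    and "isCont \<psi> 0" and \<psi>: "\<And>s. c * s * \<psi> s = G (U s)"
    and "isCont \<psi>' 0" and \<psi>': "\<forall>\<^sub>F s in nhds 0. F (U s) (c * s * \<psi>' s) = 0"
  shows "\<forall>\<^sub>F s in nhds 0. \<psi>' s = \<psi> s"
proof (rule eventually_nhds_eq_if_eventually_at[OF \<open>isCont \<psi>' 0\<close> \<open>isCont \<psi> 0\<close>])
  have "isCont (\<lambda>s. c * s * \<psi>' s) 0"
    using \<open>isCont \<psi>' 0\<close> by (intro continuous_intros)
  then have "(U \<longlongrightarrow> 0) (nhds 0)" "((\<lambda>s. c * s * \<psi>' s) \<longlongrightarrow> 0) (nhds 0)"
    using assms(4,5) by (simp_all add: tendsto_nhds_iff isCont_def)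
  from tendstoD[OF this(1) \<open>0 < \<rho>\<close>] tendstoD[OF this(2) \<open>0 < r\<close>]
  have "\<forall>\<^sub>F s in nhds 0. \<bar>U s\<bar> < \<rho>" "\<forall>\<^sub>F s in nhds 0. \<bar>c * s * \<psi>' s\<bar> < r"
    by (simp_all add: dist_real_def)
  with \<psi>' have "\<forall>\<^sub>F s in nhds 0. c * s * \<psi>' s = c * s * \<psi> s"
  proof eventually_elim
    case (elim s)
    show ?case
      using graph[OF elim(2) less_imp_le[OF elim(3)] elim(1)] \<psi>[of s] by simp
  qed
  then show "\<forall>\<^sub>F s in at 0. \<psi>' s = \<psi> s"
    using \<open>c \<noteq> 0\<close> unfolding eventually_at_filter by (auto elim: eventually_mono)
qed

lemma isCont_obtain_ball_image:
  fixes U :: "real \<Rightarrow> real"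
  assumes "isCont U 0" "U 0 = 0" "0 < \<rho>"
  obtains \<delta> where "0 < \<delta>" "\<And>s. s \<in> ball 0 \<delta> \<Longrightarrow> U s \<in> ball 0 \<rho>"
  using assms unfolding continuous_at_eps_delta by (metis dist_commute mem_ball)

lemma Ham_gam:
  "Ham a b f (gam a b \<sigma> \<phi> \<psi> s) = f (-4 * a\<^sup>2 * s * \<phi> s) (-4 * b\<^sup>2 * \<sigma> * s * \<psi> s) / 2"
proof -
  have "gam a b \<sigma> \<phi> \<psi> s = (s + \<phi> s, \<sigma> * s + \<psi> s, a * s - a * \<phi> s, - (b * \<sigma> * s) + b * \<psi> s)"
    by (simp add: gam_def vv1_def vv2_def vv3_def vv4_def algebra_simps)
  moreover have "(a * s - a * \<phi> s)\<^sup>2 - a\<^sup>2 * (s + \<phi> s)\<^sup>2 = -4 * a\<^sup>2 * s * \<phi> s"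
    by (simp add: power2_eq_square algebra_simps)
  moreover have "(- (b * \<sigma> * s) + b * \<psi> s)\<^sup>2 - b\<^sup>2 * (\<sigma> * s + \<psi> s)\<^sup>2 = -4 * b\<^sup>2 * \<sigma> * s * \<psi> s"
    by (simp add: power2_eq_square algebra_simps)
  ultimately show ?thesis
    by (simp add: Ham_def)
qed

theorem lemma3p5:
  fixes a b l \<sigma> :: real and k :: nat
    and f :: "real \<Rightarrow> real \<Rightarrow> real" and \<phi> :: "real \<Rightarrow> real"
  assumes "a > 0" and "b > 0"
    and "smooth2 f" and "f 0 0 = 0" and "pdu f 0 0 = 1" and "pdv f 0 0 = 1"
    and "\<sigma> \<in> {1, -1}"
    and "k \<ge> 1" and "l \<le> real k"
    and "Ck_on k UNIV \<phi>" and "vanishes_to_order k l UNIV \<phi>"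
  shows "\<exists>\<delta>>0. \<exists>\<psi>.
           (\<forall>s\<in>ball 0 \<delta>. Ham a b f (gam a b \<sigma> \<phi> \<psi> s) = 0) \<and>
           (\<forall>\<psi>'. continuous (at 0) \<psi>' \<and>
                  (\<forall>\<^sub>F s in nhds 0. Ham a b f (gam a b \<sigma> \<phi> \<psi>' s) = 0) \<longrightarrow>
                  (\<forall>\<^sub>F s in nhds 0. \<psi>' s = \<psi> s)) \<and>
           Ck_on k (ball 0 \<delta>) \<psi> \<and>
           vanishes_to_order k l (ball 0 \<delta>) \<psi> \<and>
           (f = (\<lambda>u v. u + v) \<longrightarrow> (\<forall>s\<in>ball 0 \<delta>. \<psi> s = - \<sigma> * a\<^sup>2 / b\<^sup>2 * \<phi> s))"
proof -
  obtain \<rho> r h where "0 < \<rho>" "\<rho> \<le> r" and h_Ck: "Ck_on k (ball 0 \<rho>) h" and h0: "h 0 = -1"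
    and on_graph: "\<And>u. \<bar>u\<bar> < \<rho> \<Longrightarrow> f u (u * h u) = 0"
    and graph_unique: "\<And>u v. \<bar>u\<bar> < \<rho> \<Longrightarrow> \<bar>v\<bar> \<le> r \<Longrightarrow> f u v = 0 \<Longrightarrow> v = u * h u"
    using smooth2_zero_set_factored[OF assms(3,4), of k] assms(5,6) by auto
  define U where "U s = -4 * a\<^sup>2 * s * \<phi> s" for s
  define \<psi> where "\<psi> s = \<phi> s * (\<sigma> * a\<^sup>2 / b\<^sup>2 * h (U s))" for s
  have U_Ck: "Ck_on k UNIV U"
    unfolding U_def by (intro Ck_on_mult Ck_on_cmult Ck_on_ident assms(10) open_UNIV)
  then have "isCont U 0"
    by (metis Ck_on_imp_continuous_on continuous_on_eq_continuous_at open_UNIV UNIV_I)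
  moreover have "U 0 = 0"
    by (simp add: U_def)
  ultimately obtain \<delta>0 where "\<delta>0 > 0" and U_small: "\<And>s. s \<in> ball 0 \<delta>0 \<Longrightarrow> U s \<in> ball 0 \<rho>"
    using isCont_obtain_ball_image \<open>0 < \<rho>\<close> by blast
  have hU_Ck: "Ck_on k (ball 0 \<delta>0) (\<lambda>s. \<sigma> * a\<^sup>2 / b\<^sup>2 * h (U s))"
    using U_small by (intro Ck_on_cmult Ck_on_compose[OF _ _ h_Ck] Ck_on_subset[OF U_Ck]) auto
  have \<psi>_Ck: "Ck_on k (ball 0 \<delta>0) \<psi>"
    unfolding \<psi>_def by (rule Ck_on_mult[OF open_ball Ck_on_subset[OF assms(10) subset_UNIV] hU_Ck])
  have Ham_eq: "Ham a b f (gam a b \<sigma> \<phi> \<psi>' s) = f (U s) ((-4 * b\<^sup>2 * \<sigma>) * s * \<psi>' s) / 2" for \<psi>' s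
    by (simp add: Ham_gam U_def)
  have \<psi>_graph: "(-4 * b\<^sup>2 * \<sigma>) * s * \<psi> s = U s * h (U s)" for s
    using assms(2,7) by (auto simp: \<psi>_def U_def field_simps)
  define \<delta> where "\<delta> = \<delta>0 / 2"
  have "\<delta> > 0" "\<delta> < \<delta>0" and \<delta>: "cball 0 \<delta> \<subseteq> ball 0 \<delta>0"
    using \<open>\<delta>0 > 0\<close> by (auto simp: \<delta>_def)
  have U_small': "\<bar>U s\<bar> < \<rho>" if "s \<in> ball 0 \<delta>" for s
    using U_small[of s] that \<open>\<delta> < \<delta>0\<close> by simp
  show ?thesis
  proof (intro exI[of _ \<delta>] exI[of _ \<psi>] conjI allI impI ballI)
    show "Ham a b f (gam a b \<sigma> \<phi> \<psi> s) = 0" if "s \<in> ball 0 \<delta>" for s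
      unfolding Ham_eq \<psi>_graph using on_graph[OF U_small'[OF that]] by simp
    show "Ck_on k (ball 0 \<delta>) \<psi>"
      using \<psi>_Ck Ck_on_subset \<delta> ball_subset_cball by blast
    show "vanishes_to_order k l (ball 0 \<delta>) \<psi>"
      unfolding \<psi>_def by (rule vanishes_to_order_mult_Ck_on[OF assms(11) subset_UNIV assms(9) open_ball \<delta> hU_Ck])
    show "\<psi> s = - \<sigma> * a\<^sup>2 / b\<^sup>2 * \<phi> s" if "f = (\<lambda>u v. u + v)" "s \<in> ball 0 \<delta>" for s
    proof -
      have "h (U s) = -1"
        using graph_factor_of_sum_eq_minus_one[where h = h, OF \<open>\<rho> \<le> r\<close> h0 graph_unique[unfolded that(1)]
            U_small'[OF that(2)]] .
      then show ?thesis
        by (simp add: \<psi>_def)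
    qed
    show "\<forall>\<^sub>F s in nhds 0. \<psi>' s = \<psi> s"
      if "continuous (at 0) \<psi>' \<and> (\<forall>\<^sub>F s in nhds 0. Ham a b f (gam a b \<sigma> \<phi> \<psi>' s) = 0)" for \<psi>'
    proof -
      from that have "isCont \<psi>' 0" and "\<forall>\<^sub>F s in nhds 0. f (U s) ((-4 * b\<^sup>2 * \<sigma>) * s * \<psi>' s) = 0"
        by (simp_all add: Ham_eq)
      moreover have "isCont \<psi> 0"
        using Ck_on_imp_continuous_on[OF \<psi>_Ck] \<open>\<delta>0 > 0\<close> by (simp add: continuous_on_eq_continuous_at)
      moreover have "0 < r" "-4 * b\<^sup>2 * \<sigma> \<noteq> 0"
        using \<open>0 < \<rho>\<close> \<open>\<rho> \<le> r\<close> assms(2,7) by auto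
      ultimately show ?thesis
        using eventually_eq_solution_along_curve[where G = "\<lambda>u. u * h u", OF graph_unique \<open>0 < \<rho>\<close> _
            \<open>isCont U 0\<close> \<open>U 0 = 0\<close> _ _ \<psi>_graph] by blast
    qed
  qed (fact \<open>\<delta> > 0\<close>)
qed

end
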